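(* Let $A$ be a finite alphabet, let $f$ be a bLSP morphism on $A$ and let $\mathbf{w}$ be an infinite word over $A$. If $f(\mathbf{w})$ is LSP, then $\mathbf{w}$ is LSP.
   Context: A finite word $u$ is a left special factor of a word $w$ if there are distinct letters $x\neq y$ with $xu$ and $yu$ factors of $w$. A word is LSP if every left special factor of it is a prefix of it. A bLSP morphism on $A$ is an endomorphism $f$ of $A^*$ such that there is a letter $\alpha$ with $f(\alpha)=\alpha$ and, for every letter $\beta\neq\alpha$, there is a letter $\gamma$ with $f(\beta)=f(\gamma)\beta$. *)

theory Defs
  imports Main
begin

definition factor :: "'a list \<Rightarrow> (nat \<Rightarrow> 'a) \<Rightarrow> bool" where
  "factor u w \<longleftrightarrow> (\<exists>i. u = map w [i..<i + length u])"

definition is_prefix :: "'a list \<Rightarrow> (nat \<Rightarrow> 'a) \<Rightarrow> bool" where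
  "is_prefix u w \<longleftrightarrow> u = map w [0..<length u]"

definition left_special :: "'a list \<Rightarrow> (nat \<Rightarrow> 'a) \<Rightarrow> bool" where
  "left_special u w \<longleftrightarrow> (\<exists>x y. x \<noteq> y \<and> factor (x # u) w \<and> factor (y # u) w)"

definition LSP :: "(nat \<Rightarrow> 'a) \<Rightarrow> bool" where
  "LSP w \<longleftrightarrow> (\<forall>u. left_special u w \<longrightarrow> is_prefix u w)"

definition bLSP :: "'a set \<Rightarrow> ('a \<Rightarrow> 'a list) \<Rightarrow> bool" where
  "bLSP A f \<longleftrightarrow> (\<forall>a\<in>A. set (f a) \<subseteq> A) \<and>
     (\<exists>\<alpha>\<in>A. f \<alpha> = [\<alpha>] \<and> (\<forall>\<beta>\<in>A. \<beta> \<noteq> \<alpha> \<longrightarrow> (\<exists>\<gamma>\<in>A. f \<beta> = f \<gamma> @ [\<beta>])))"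

text \<open>Image of an infinite word under a morphism: the n-th letter of
  f(w 0) f(w 1) f(w 2) ...  (well defined whenever all images are nonempty,
  which holds for bLSP morphisms).\<close>

definition morph_inf :: "('a \<Rightarrow> 'a list) \<Rightarrow> (nat \<Rightarrow> 'a) \<Rightarrow> nat \<Rightarrow> 'a" where
  "morph_inf f w n = concat (map (f \<circ> w) [0..<Suc n]) ! n"

end

theory Submission
  imports Defs "HOL-Library.Sublist"
begin

text \<open>For a bLSP morphism f there is a letter \<alpha> such that every image f(c) is \<alpha> followed by
  an \<alpha>-free word and ends with c; so words in the image of f can be decoded by cutting them
  before each \<alpha>. If x u and y u are factors of w, then x f(u) \<alpha> and y f(u) \<alpha> are factors
  of f(w), since f(x), f(y) end with x, y and the image of the letter following u starts with \<alpha>.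
  So f(u) \<alpha> is left special in f(w), hence a prefix of f(w), and decoding that prefix shows
  that u is a prefix of w.\<close>

lemma append_eq_split_at_marker:
  assumes "\<alpha> \<notin> set ta" "\<alpha> \<notin> set tb" "ta @ \<alpha> # s = tb @ r" "r = [] \<or> hd r = \<alpha>"
  shows "ta = tb \<and> r = \<alpha> # s"
proof -
  have "takeWhile (\<lambda>c. c \<noteq> \<alpha>) (ta @ \<alpha> # s) = ta"
    using assms(1) by (auto simp: takeWhile_append)
  moreover have "takeWhile (\<lambda>c. c \<noteq> \<alpha>) (tb @ r) = tb"
    using assms(2,4) by (cases r) (auto simp: takeWhile_append)
  ultimately have "ta = tb" using assms(3) by simp
  with assms(3) show ?thesis by simp
qed

lemma length_le_length_concat:
  "\<forall>x\<in>set xs. f x \<noteq> [] \<Longrightarrow> length xs \<le> length (concat (map f xs))"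
proof (induction xs)
  case (Cons a xs)
  then have "1 \<le> length (f a)" by (simp add: Suc_le_eq)
  with Cons show ?case by simp
qed simp

lemma concat_map_upt_split:
  "i \<le> j \<Longrightarrow> j \<le> k \<Longrightarrow>
    concat (map g [i..<k]) = concat (map g [i..<j]) @ concat (map g [j..<k])"
  by (metis concat_append map_append le_add_diff_inverse upt_add_eq_append)

lemma factor_set_subset: "factor v w \<Longrightarrow> set v \<subseteq> range w"
  unfolding factor_def by (metis image_mono set_map subset_UNIV)

lemma is_prefix_imp_prefix:
  assumes "is_prefix u v" "is_prefix u' v" "length u \<le> length u'"
  shows "prefix u u'"
proof -
  have "u = take (length u) u'"
    using assms unfolding is_prefix_def by (metis take_map take_upt add_0)
  then show ?thesis by (metis take_is_prefix)
qed

lemma prefix_imp_is_prefix: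
  assumes "prefix u (map w [0..<m])"
  shows "is_prefix u w"
proof -
  have "length u \<le> m" using prefix_length_le[OF assms] by simp
  moreover have "u = take (length u) (map w [0..<m])"
    using assms by (metis append_eq_conv_conj prefixE)
  ultimately show ?thesis unfolding is_prefix_def by (simp add: take_map)
qed

lemma is_prefix_imp_factor:
  assumes "is_prefix (p @ v @ s) w"
  shows "factor v w"
proof -
  have "v = take (length v) (drop (length p) (p @ v @ s))" by simp
  also have "\<dots> = take (length v) (drop (length p) (map w [0..<length (p @ v @ s)]))"
    using assms unfolding is_prefix_def by simp
  also have "\<dots> = map w [length p..<length p + length v]"
    by (simp add: drop_map take_map)
  finally show ?thesis unfolding factor_def by blast
qed

definition marker_morphism :: "'a \<Rightarrow> 'a set \<Rightarrow> ('a \<Rightarrow> 'a list) \<Rightarrow> bool" where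
  "marker_morphism \<alpha> A f \<longleftrightarrow> (\<forall>c\<in>A. (\<exists>t. f c = \<alpha> # t \<and> \<alpha> \<notin> set t) \<and> last (f c) = c)"

lemma marker_morphism_nonempty:
  "marker_morphism \<alpha> A f \<Longrightarrow> c \<in> A \<Longrightarrow> f c \<noteq> []"
  unfolding marker_morphism_def by auto

lemma bLSP_marker_morphism:
  assumes "bLSP A f"
  obtains \<alpha> where "marker_morphism \<alpha> A f"
proof -
  obtain \<alpha> where \<alpha>: "f \<alpha> = [\<alpha>]"
    and step: "\<forall>\<beta>\<in>A. \<beta> \<noteq> \<alpha> \<longrightarrow> (\<exists>\<gamma>\<in>A. f \<beta> = f \<gamma> @ [\<beta>])"
    using assms unfolding bLSP_def by blast
  have "(\<exists>t. f c = \<alpha> # t \<and> \<alpha> \<notin> set t) \<and> last (f c) = c" if "c \<in> A" for c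
    using that
  proof (induction "length (f c)" arbitrary: c rule: less_induct)
    case less
    show ?case
    proof (cases "c = \<alpha>")
      case True
      then show ?thesis using \<alpha> by simp
    next
      case False
      then obtain \<gamma> where "\<gamma> \<in> A" and f_c: "f c = f \<gamma> @ [c]"
        using step less.prems by blast
      moreover have "length (f \<gamma>) < length (f c)" using f_c by simp
      ultimately obtain t where "f \<gamma> = \<alpha> # t" "\<alpha> \<notin> set t"
        using less.hyps by blast
      with f_c False show ?thesis by simp
    qed
  qed
  then show ?thesis using that unfolding marker_morphism_def by blast
qed

lemma marker_morphism_concat_hd:
  assumes "marker_morphism \<alpha> A f" "set u \<subseteq> A"
  shows "concat (map f u) = [] \<or> hd (concat (map f u)) = \<alpha>"
  using assms unfolding marker_morphism_def by (cases u) auto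

lemma marker_morphism_decode:
  assumes code: "marker_morphism \<alpha> A f"
    and "set u \<subseteq> A" "set ws \<subseteq> A" "concat (map f u) @ \<alpha> # z = concat (map f ws)"
  shows "prefix u ws"
  using assms(2-4)
proof (induction u arbitrary: ws)
  case Nil
  then show ?case by simp
next
  case (Cons a u)
  then obtain b ws' where ws: "ws = b # ws'"
    by (cases ws) auto
  have a: "a \<in> A" and b: "b \<in> A" using Cons.prems ws by auto
  obtain ta where ta: "f a = \<alpha> # ta" "\<alpha> \<notin> set ta"
    using code a unfolding marker_morphism_def by blast
  obtain tb where tb: "f b = \<alpha> # tb" "\<alpha> \<notin> set tb"
    using code b unfolding marker_morphism_def by blast
  obtain s where s: "concat (map f u) @ \<alpha> # z = \<alpha> # s"
    using marker_morphism_concat_hd[OF code, of u] Cons.prems(1)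
    by (cases "concat (map f u)") auto
  have "ta @ \<alpha> # s = tb @ concat (map f ws')"
    using Cons.prems(3) ws ta tb s by simp
  moreover have "concat (map f ws') = [] \<or> hd (concat (map f ws')) = \<alpha>"
    using marker_morphism_concat_hd[OF code] Cons.prems(2) ws by simp
  ultimately have "ta = tb \<and> concat (map f ws') = \<alpha> # s"
    by (rule append_eq_split_at_marker[OF ta(2) tb(2)])
  then have "ta = tb" and rest: "concat (map f u) @ \<alpha> # z = concat (map f ws')"
    using s by auto
  then have "last (f a) = last (f b)" using ta tb by simp
  then have "a = b" using code a b unfolding marker_morphism_def by simp
  moreover have "prefix u ws'" using Cons.IH[OF _ _ rest] Cons.prems ws by simp
  ultimately show ?case using ws by simp
qed

lemma morph_inf_is_prefix:
  assumes ne: "\<forall>i. f (w i) \<noteq> []"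
  shows "is_prefix (concat (map (f \<circ> w) [0..<m])) (morph_inf f w)"
proof -
  define P where "P k = concat (map (f \<circ> w) [0..<k])" for k
  have P_extend: "\<exists>r. P k' = P k @ r" if "k \<le> k'" for k k'
    using concat_map_upt_split[OF le0 that] unfolding P_def by blast
  have "morph_inf f w n = P m ! n" if n: "n < length (P m)" for n
  proof -
    obtain r r' where r: "P (max m (Suc n)) = P m @ r"
      and r': "P (max m (Suc n)) = P (Suc n) @ r'"
      using P_extend[of m "max m (Suc n)"] P_extend[of "Suc n" "max m (Suc n)"] by auto
    have "n < length (P (Suc n))"
      using length_le_length_concat[of "[0..<Suc n]" "f \<circ> w"] ne unfolding P_def by simp
    then have "P (Suc n) ! n = P m ! n"
      using r r' n by (metis nth_append)
    then show ?thesis unfolding morph_inf_def P_def by simp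
  qed
  then show ?thesis
    unfolding is_prefix_def P_def[symmetric] by (intro nth_equalityI) auto
qed

lemma morph_inf_factor_of_block:
  assumes "\<forall>i. f (w i) \<noteq> []" "i \<le> j"
    and "concat (map (f \<circ> w) [i..<j]) = p @ v @ s"
  shows "factor v (morph_inf f w)"
proof -
  have "concat (map (f \<circ> w) [0..<j]) = (concat (map (f \<circ> w) [0..<i]) @ p) @ v @ s"
    using concat_map_upt_split[OF le0 assms(2), of "f \<circ> w"] assms(3) by simp
  then show ?thesis
    using morph_inf_is_prefix[OF assms(1), of j] is_prefix_imp_factor by metis
qed

lemma marker_morphism_factor_image:
  assumes code: "marker_morphism \<alpha> A f" and w: "\<forall>i. w i \<in> A"
    and "factor (c # u) w"
  shows "factor (c # concat (map f u) @ [\<alpha>]) (morph_inf f w)"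
proof -
  obtain i where i: "c # u = map w [i..<i + Suc (length u)]"
    using assms(3) unfolding factor_def by auto
  define j where "j = i + Suc (Suc (length u))"
  define d where "d = w (i + Suc (length u))"
  have "map w [i..<j] = c # u @ [d]"
    using i unfolding j_def d_def by simp
  then have block: "concat (map (f \<circ> w) [i..<j]) = f c @ concat (map f u) @ f d"
    by (simp flip: map_map)
  have "c = w i" using i by (simp del: upt_Suc add: upt_conv_Cons)
  then have "f c = butlast (f c) @ [c]"
    using code w unfolding marker_morphism_def by (metis append_butlast_last_id list.distinct(1))
  moreover obtain t where "f d = \<alpha> # t"
    using code w unfolding marker_morphism_def d_def by blast
  ultimately have "concat (map (f \<circ> w) [i..<j])
      = butlast (f c) @ (c # concat (map f u) @ [\<alpha>]) @ t"
    using block by (metis append.assoc append_Cons append_Nil)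
  moreover have "\<forall>i. f (w i) \<noteq> []"
    using marker_morphism_nonempty[OF code] w by blast
  ultimately show ?thesis
    using morph_inf_factor_of_block[of f w i j] unfolding j_def by simp
qed

lemma marker_morphism_left_special_image:
  assumes code: "marker_morphism \<alpha> A f" and w: "\<forall>i. w i \<in> A"
    and "left_special u w"
  shows "left_special (concat (map f u) @ [\<alpha>]) (morph_inf f w)"
  using assms(3) marker_morphism_factor_image[OF code w]
  unfolding left_special_def by (metis append_Cons)

lemma marker_morphism_is_prefix_preimage:
  assumes code: "marker_morphism \<alpha> A f" and w: "\<forall>i. w i \<in> A" and u: "set u \<subseteq> A"
    and "is_prefix (concat (map f u) @ [\<alpha>]) (morph_inf f w)"
  shows "is_prefix u w"
proof -
  define ws where "ws = map w [0..<Suc (length (concat (map f u)))]"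
  have ne: "\<forall>i. f (w i) \<noteq> []"
    using marker_morphism_nonempty[OF code] w by blast
  have "is_prefix (concat (map f ws)) (morph_inf f w)"
    using morph_inf_is_prefix[OF ne] unfolding ws_def by (simp only: map_map)
  moreover have "length (concat (map f u) @ [\<alpha>]) \<le> length (concat (map f ws))"
    using length_le_length_concat[of ws f] ne unfolding ws_def by auto
  ultimately have "prefix (concat (map f u) @ [\<alpha>]) (concat (map f ws))"
    using is_prefix_imp_prefix assms(4) by blast
  then obtain z where "concat (map f u) @ \<alpha> # z = concat (map f ws)"
    by (auto elim: prefixE)
  moreover have "set ws \<subseteq> A"
    using w unfolding ws_def by auto
  ultimately have "prefix u ws"
    using marker_morphism_decode[OF code u] by blast
  then show ?thesis
    unfolding ws_def by (rule prefix_imp_is_prefix)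
qed

theorem lemma2:
  fixes A :: "'a set" and f :: "'a \<Rightarrow> 'a list" and w :: "nat \<Rightarrow> 'a"
  assumes "finite A"
    and "bLSP A f"
    and "\<forall>i. w i \<in> A"
    and "LSP (morph_inf f w)"
  shows "LSP w"
  unfolding LSP_def
proof (intro allI impI)
  fix u assume special: "left_special u w"
  obtain \<alpha> where code: "marker_morphism \<alpha> A f"
    using bLSP_marker_morphism[OF assms(2)] .
  have "is_prefix (concat (map f u) @ [\<alpha>]) (morph_inf f w)"
    using marker_morphism_left_special_image[OF code assms(3) special] assms(4)
    unfolding LSP_def by blast
  moreover have "set u \<subseteq> A"
    using special factor_set_subset assms(3) unfolding left_special_def by fastforce
  ultimately show "is_prefix u w"
    using marker_morphism_is_prefix_preimage[OF code assms(3)] by blast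
qed

end
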